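(* Let $k\ge 1$. The square complex orthogonal designs $\mathcal{C}_k$ and $\mathcal{C}_k^-$ induce two non-equivalent irreducible representations of dimension $2^{k-1}$ of the group $\mathcal{G}_{2k-1}$.
   Context: Let $z_1,\ldots,z_k$ be formal complex indeterminates, with $z_i^*$ the complex conjugate. Define recursively $\mathcal{C}_1=(z_1)$ and, for $k>1$, the $2^{k-1}\times 2^{k-1}$ matrix $\mathcal{C}_k=\begin{pmatrix}\mathcal{C}_{k-1} & z_k I_{2^{k-2}}\\ -z_k^* I_{2^{k-2}} & \mathcal{C}_{k-1}^H\end{pmatrix}$, and let $\mathcal{C}_k^-$ be obtained from $\mathcal{C}_k$ by replacing $z_k$ with $z_k^*$. Both satisfy $\mathcal{C}^H\mathcal{C}=(\sum_i|z_i|^2)I$. For $m\ge 0$, $\mathcal{G}_{m}$ denotes the group of order $2^{m+1}$ generated by $g_1,\ldots,g_m$ and a central element $-1$ of order $2$, subject to $g_i^2=-1$ and $g_ig_j=-g_jg_i$ for $i\ne j$; its elements are $\pm\prod_{i\in S}g_i$, $S\subseteq\{1,\ldots,m\}$. Representation induced by a square design: write a square design $\mathcal{O}$ of size $n$ in the $k$ variables as $\mathcal{O}=\sum_{i=1}^k(z_iA_i+z_i^*B_i)$ with $A_i,B_i\in M_n(\mathbb{C})$; with $z_i=x_i+\sqrt{-1}y_i$ this is $\sum_{i=1}^k x_iF_i+\sum_{i=1}^k y_iF_{k+i}$ where $F_i=A_i+B_i$, $F_{k+i}=\sqrt{-1}(A_i-B_i)$. Set $E_{j}=F_{j+1}$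 for $j=0,\ldots,2k-1$ (these are unitary and satisfy $E_i^HE_j+E_j^HE_i=0$ for $i\neq j$), and $G_i=E_0^HE_i$ for $i=1,\ldots,2k-1$. The induced representation $\rho:\mathcal{G}_{2k-1}\to U_n(\mathbb{C})$ is the homomorphism with $\rho(g_i)=G_i$ and $\rho(-1)=-I_n$. *)

theory Defs
  imports "Jordan_Normal_Form.Matrix" "HOL-Algebra.Group"
begin

definition mat_H :: "complex mat \<Rightarrow> complex mat" where
  "mat_H A = transpose_mat (map_mat cnj A)"

text \<open>A design in the variables z_1,...,z_k is represented as the function mapping
  a value assignment z (index i gives z_i) to the resulting complex matrix.\<close>

fun CC :: "nat \<Rightarrow> (nat \<Rightarrow> complex) \<Rightarrow> complex mat" where
  "CC 0 z = 0\<^sub>m 0 0"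
| "CC (Suc 0) z = mat 1 1 (\<lambda>_. z 1)"
| "CC (Suc (Suc k)) z =
     four_block_mat (CC (Suc k) z) (z (k+2) \<cdot>\<^sub>m 1\<^sub>m (2^k))
                    ((- cnj (z (k+2))) \<cdot>\<^sub>m 1\<^sub>m (2^k)) (mat_H (CC (Suc k) z))"

definition CCminus :: "nat \<Rightarrow> (nat \<Rightarrow> complex) \<Rightarrow> complex mat" where
  "CCminus k z = CC k (z(k := cnj (z k)))"

text \<open>O = sum_i x_i F_i + sum_i y_i F_(k+i), with z_i = x_i + sqrt(-1) y_i. Since O is
  real-linear in (x,y), F_i is O at z = e_i and F_(k+i) is O at z = sqrt(-1) e_i.\<close>
definition Fcoef :: "((nat \<Rightarrow> complex) \<Rightarrow> complex mat) \<Rightarrow> nat \<Rightarrow> nat \<Rightarrow> complex mat" where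
  "Fcoef D k j =
     (if j \<le> k then D (\<lambda>i. if i = j then 1 else 0)
      else D (\<lambda>i. if i = j - k then \<i> else 0))"

definition Egen :: "((nat \<Rightarrow> complex) \<Rightarrow> complex mat) \<Rightarrow> nat \<Rightarrow> nat \<Rightarrow> complex mat" where
  "Egen D k j = Fcoef D k (j + 1)"

definition Ggen :: "((nat \<Rightarrow> complex) \<Rightarrow> complex mat) \<Rightarrow> nat \<Rightarrow> nat \<Rightarrow> complex mat" where
  "Ggen D k i = mat_H (Egen D k 0) * Egen D k i"

text \<open>Element (b, S) with S a subset of {1..m} stands for (-1)^b * g_(i1) * ... * g_(ir),
  where S = {i1 < ... < ir}. Multiplication follows from g_i^2 = -1, g_i g_j = - g_j g_i.\<close>
definition Gm_mult :: "bool \<times> nat set \<Rightarrow> bool \<times> nat set \<Rightarrow> bool \<times> nat set" where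
  "Gm_mult x y = (case x of (a, S) \<Rightarrow> case y of (b, T) \<Rightarrow>
     ((a \<noteq> b) \<noteq> odd (card {(i, j). i \<in> S \<and> j \<in> T \<and> j < i} + card (S \<inter> T)),
      (S - T) \<union> (T - S)))"

definition Gm :: "nat \<Rightarrow> (bool \<times> nat set) monoid" where
  "Gm m = \<lparr>carrier = {(b, S). S \<subseteq> {1..m}}, mult = Gm_mult, one = (False, {})\<rparr>"

definition Ugrp :: "nat \<Rightarrow> complex mat monoid" where
  "Ugrp n = \<lparr>carrier = {M \<in> carrier_mat n n. mat_H M * M = 1\<^sub>m n},
             mult = (*), one = 1\<^sub>m n\<rparr>"

definition rep_of_gens :: "nat \<Rightarrow> (nat \<Rightarrow> complex mat) \<Rightarrow> bool \<times> nat set \<Rightarrow> complex mat" where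
  "rep_of_gens n Gs x = (case x of (b, S) \<Rightarrow>
     (if b then (-1) \<cdot>\<^sub>m 1\<^sub>m n else 1\<^sub>m n) *
       foldr (\<lambda>i M. Gs i * M) (sorted_list_of_set S) (1\<^sub>m n))"

definition induced_rep :: "((nat \<Rightarrow> complex) \<Rightarrow> complex mat) \<Rightarrow> nat \<Rightarrow> nat
     \<Rightarrow> bool \<times> nat set \<Rightarrow> complex mat" where
  "induced_rep D k n = rep_of_gens n (Ggen D k)"

definition invariant_subspace :: "nat \<Rightarrow> complex mat set \<Rightarrow> complex vec set \<Rightarrow> bool" where
  "invariant_subspace n M W \<longleftrightarrow>
     W \<subseteq> carrier_vec n \<and> 0\<^sub>v n \<in> W \<and>
     (\<forall>v\<in>W. \<forall>w\<in>W. v + w \<in> W) \<and> (\<forall>c. \<forall>v\<in>W. c \<cdot>\<^sub>v v \<in> W) \<and>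
     (\<forall>A\<in>M. \<forall>v\<in>W. A *\<^sub>v v \<in> W)"

definition irreducible_rep :: "('g, 'b) monoid_scheme \<Rightarrow> nat \<Rightarrow> ('g \<Rightarrow> complex mat) \<Rightarrow> bool" where
  "irreducible_rep G n \<rho> \<longleftrightarrow> n > 0 \<and>
     (\<forall>W. invariant_subspace n (\<rho> ` carrier G) W \<longrightarrow> W = {0\<^sub>v n} \<or> W = carrier_vec n)"

definition equivalent_reps :: "('g, 'b) monoid_scheme \<Rightarrow> nat \<Rightarrow> ('g \<Rightarrow> complex mat)
     \<Rightarrow> ('g \<Rightarrow> complex mat) \<Rightarrow> bool" where
  "equivalent_reps G n \<rho> \<sigma> \<longleftrightarrow>
     (\<exists>T \<in> carrier_mat n n. invertible_mat T \<and> (\<forall>g \<in> carrier G. T * \<rho> g = \<sigma> g * T))"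

end

theory Submission
  imports Defs "Jordan_Normal_Form.Spectral_Radius"
begin

text \<open>The coefficient matrices \<open>E\<^sub>0 = I, E\<^sub>1, ..., E\<^sub>2\<^sub>k\<^sub>-\<^sub>1\<close> of \<open>C\<^sub>k\<close> are the values of
  \<open>C\<^sub>k\<close> at the points \<open>e\<^sub>p\<close> and \<open>\<surd>-1 e\<^sub>p\<close>. Induction along the block recursion gives
  \<open>C(z)\<^sup>H C(w) + C(w)\<^sup>H C(z) = 2 Re \<langle>z, w\<rangle> I\<close>, so these matrices are unitary, skew-Hermitian
  and pairwise anticommuting, and \<open>G\<^sub>i = E\<^sub>i\<close> satisfy the defining relations of \<open>\<G>\<^sub>2\<^sub>k\<^sub>-\<^sub>1\<close>.
  Irreducibility is again proved by induction on \<open>k\<close>: the coefficients of \<open>C\<^sub>k\<^sub>-\<^sub>1\<close> act on both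
  halves of \<open>\<complex>\<^bsup>2\<^sup>k\<^sup>-\<^sup>1\<^esup>\<close> separately, while \<open>E\<^sub>k\<^sub>-\<^sub>1\<close> and \<open>E\<^sub>2\<^sub>k\<^sub>-\<^sub>1\<close> exchange
  the halves. The design \<open>C\<^sub>k\<^sup>-\<close> differs from \<open>C\<^sub>k\<close> only in the sign of \<open>E\<^sub>2\<^sub>k\<^sub>-\<^sub>1\<close>. As
  \<open>2k - 1\<close> is odd, \<open>g\<^sub>1 \<cdots> g\<^sub>2\<^sub>k\<^sub>-\<^sub>1\<close> is central, so by Schur's lemma it acts as a nonzero
  scalar \<open>c\<close> in the first representation and as \<open>-c\<close> in the second, which rules out an
  intertwiner.\<close>

lemma dim_mat_H[simp]: "dim_row (mat_H A) = dim_col A" "dim_col (mat_H A) = dim_row A"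
  by (auto simp: mat_H_def)

lemma index_mat_H[simp]:
  "i < dim_col A \<Longrightarrow> j < dim_row A \<Longrightarrow> mat_H A $$ (i,j) = cnj (A $$ (j,i))"
  by (simp add: mat_H_def)

lemma mat_H_carrier[simp]: "A \<in> carrier_mat n m \<Longrightarrow> mat_H A \<in> carrier_mat m n"
  unfolding carrier_mat_def by simp

lemma mat_H_mult:
  assumes "A \<in> carrier_mat n k" "B \<in> carrier_mat k m"
  shows "mat_H (A * B) = mat_H B * mat_H A"
proof (rule eq_matI)
  fix i j assume "i < dim_row (mat_H B * mat_H A)" "j < dim_col (mat_H B * mat_H A)"
  then have i: "i < m" and j: "j < n" using assms by auto
  have "mat_H (A * B) $$ (i,j) = (\<Sum>l<k. cnj (A $$ (j,l)) * cnj (B $$ (l,i)))"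
    using i j assms by (simp add: scalar_prod_def lessThan_atLeast0)
  also have "\<dots> = (mat_H B * mat_H A) $$ (i,j)"
    using i j assms by (simp add: scalar_prod_def lessThan_atLeast0 mult.commute)
  finally show "mat_H (A * B) $$ (i,j) = (mat_H B * mat_H A) $$ (i,j)" .
qed (use assms in auto)

lemma mat_H_one[simp]: "mat_H (1\<^sub>m n) = 1\<^sub>m n"
  by (rule eq_matI) auto

lemma mat_H_zero[simp]: "mat_H (0\<^sub>m n m) = 0\<^sub>m m n"
  by (rule eq_matI) auto

lemma mat_H_smult: "mat_H (c \<cdot>\<^sub>m A) = cnj c \<cdot>\<^sub>m mat_H A"
  by (rule eq_matI) auto

lemma mat_H_four_block_mat:
  assumes "A \<in> carrier_mat n1 m1" "B \<in> carrier_mat n1 m2" "C \<in> carrier_mat n2 m1" "D \<in> carrier_mat n2 m2"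
  shows "mat_H (four_block_mat A B C D) = four_block_mat (mat_H A) (mat_H C) (mat_H B) (mat_H D)"
  using assms unfolding mat_H_def
  by (subst map_four_block_mat[OF assms], subst transpose_four_block_mat) auto

lemma smult_one_mult_mat: "dim_row (X::complex mat) = n \<Longrightarrow> (c \<cdot>\<^sub>m 1\<^sub>m n) * X = c \<cdot>\<^sub>m X"
  by (metis carrier_matI mult_smult_assoc_mat[OF one_carrier_mat] left_mult_one_mat)

lemma mult_smult_one_mat: "dim_col (X::complex mat) = n \<Longrightarrow> X * (c \<cdot>\<^sub>m 1\<^sub>m n) = c \<cdot>\<^sub>m X"
  by (metis carrier_matI mult_smult_distrib[OF _ one_carrier_mat] right_mult_one_mat)

lemma smult_smult_mat: "s \<cdot>\<^sub>m (t \<cdot>\<^sub>m (X::complex mat)) = (s * t) \<cdot>\<^sub>m X"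
  by (rule eq_matI) auto

lemma smult_uminus_mat: "c \<cdot>\<^sub>m (- A) = - (c \<cdot>\<^sub>m (A::complex mat))"
  by (rule eq_matI) auto

lemma smult_mult_smult_mat:
  "A \<in> carrier_mat n k \<Longrightarrow> B \<in> carrier_mat k m \<Longrightarrow>
   (s \<cdot>\<^sub>m A) * (t \<cdot>\<^sub>m (B::complex mat)) = (s * t) \<cdot>\<^sub>m (A * B)"
  by (simp add: mult_smult_assoc_mat[of _ n k _ m] mult_smult_distrib[of _ n k _ m] smult_smult_mat
      mult.commute)

lemma one_smult_mat: "(1::complex) \<cdot>\<^sub>m X = X"
  by (rule eq_matI) auto

lemma minus_one_smult_mat: "(-1::complex) \<cdot>\<^sub>m X = - X"
  by (rule eq_matI) auto

lemma smult_mat_mult_vec: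
  "dim_vec v = dim_col A \<Longrightarrow> (c \<cdot>\<^sub>m A) *\<^sub>v v = c \<cdot>\<^sub>v (A *\<^sub>v (v::complex vec))"
  by (intro eq_vecI) (auto simp: scalar_prod_def sum_distrib_left mult.assoc)

lemma zero_mat_mult_vec[simp]: "dim_vec (v::complex vec) = m \<Longrightarrow> 0\<^sub>m n m *\<^sub>v v = 0\<^sub>v n"
  by (rule eq_vecI) (auto simp: scalar_prod_def)

lemma mat_mult_zero_vec[simp]: "dim_col (A::complex mat) = m \<Longrightarrow> A *\<^sub>v 0\<^sub>v m = 0\<^sub>v (dim_row A)"
  by (rule eq_vecI) (auto simp: scalar_prod_def)

lemma mat_eq_one_if_double:
  assumes "(A::complex mat) \<in> carrier_mat n n" "A + A = 2 \<cdot>\<^sub>m 1\<^sub>m n"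
  shows "A = 1\<^sub>m n"
proof (rule eq_matI)
  fix i j assume "i < dim_row (1\<^sub>m n)" "j < dim_col (1\<^sub>m n)"
  moreover have "(A + A) $$ (i, j) = (2 \<cdot>\<^sub>m 1\<^sub>m n) $$ (i, j)" using assms(2) by simp
  ultimately show "A $$ (i, j) = 1\<^sub>m n $$ (i, j)" using assms(1) by (auto split: if_splits)
qed (use assms in auto)

lemma mat_eq_uminus_if_add_zero:
  assumes "(A::complex mat) \<in> carrier_mat n n" "B \<in> carrier_mat n n" "A + B = 0 \<cdot>\<^sub>m 1\<^sub>m n"
  shows "A = - B"
proof (rule eq_matI)
  fix i j assume "i < dim_row (- B)" "j < dim_col (- B)"
  moreover have "(A + B) $$ (i, j) = (0 \<cdot>\<^sub>m 1\<^sub>m n) $$ (i, j)" using assms(3) by simp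
  ultimately show "A $$ (i, j) = (- B) $$ (i, j)"
    using assms(1,2) by (auto simp: eq_neg_iff_add_eq_0)
qed (use assms in auto)

section \<open>Anticommuting unitary square roots of \<open>-I\<close>\<close>

definition gen_word :: "nat \<Rightarrow> (nat \<Rightarrow> complex mat) \<Rightarrow> nat list \<Rightarrow> complex mat" where
  "gen_word n Gs xs = foldr (\<lambda>i M. Gs i * M) xs (1\<^sub>m n)"

lemma gen_word_Nil[simp]: "gen_word n Gs [] = 1\<^sub>m n"
  and gen_word_Cons[simp]: "gen_word n Gs (i # xs) = Gs i * gen_word n Gs xs"
  by (simp_all add: gen_word_def)

lemma gen_word_carrier:
  "(\<And>i. i \<in> set xs \<Longrightarrow> Gs i \<in> carrier_mat n n) \<Longrightarrow> gen_word n Gs xs \<in> carrier_mat n n"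
  by (induction xs) (auto intro: mult_carrier_mat)

lemma gen_word_unitary:
  assumes "\<And>i. i \<in> set xs \<Longrightarrow> Gs i \<in> carrier_mat n n \<and> mat_H (Gs i) * Gs i = 1\<^sub>m n"
  shows "mat_H (gen_word n Gs xs) * gen_word n Gs xs = 1\<^sub>m n"
  using assms
proof (induction xs)
  case (Cons i xs)
  let ?G = "Gs i" and ?W = "gen_word n Gs xs"
  have G: "?G \<in> carrier_mat n n" and GU: "mat_H ?G * ?G = 1\<^sub>m n" using Cons.prems by auto
  have W: "?W \<in> carrier_mat n n" using Cons.prems by (auto intro: gen_word_carrier)
  have HG: "mat_H ?G \<in> carrier_mat n n" and HW: "mat_H ?W \<in> carrier_mat n n" using G W by auto
  have "mat_H (?G * ?W) * (?G * ?W) = (mat_H ?W * mat_H ?G) * (?G * ?W)"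
    using G W by (simp add: mat_H_mult)
  also have "\<dots> = mat_H ?W * ((mat_H ?G * ?G) * ?W)"
    using HW HG G W by (simp add: assoc_mult_mat[OF HW HG, of _ n] assoc_mult_mat[OF HG G W])
  also have "\<dots> = 1\<^sub>m n" using GU W Cons by simp
  finally show ?case by simp
qed simp

lemma gen_word_commute:
  assumes "M \<in> carrier_mat n n"
    and "\<And>i. i \<in> set xs \<Longrightarrow> Gs i \<in> carrier_mat n n \<and> M * Gs i = Gs i * M"
  shows "M * gen_word n Gs xs = gen_word n Gs xs * M"
  using assms(2)
proof (induction xs)
  case (Cons i xs)
  let ?G = "Gs i" and ?W = "gen_word n Gs xs"
  have G: "?G \<in> carrier_mat n n" and MG: "M * ?G = ?G * M" using Cons.prems by auto
  have W: "?W \<in> carrier_mat n n" using Cons.prems by (auto intro: gen_word_carrier)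
  have "M * (?G * ?W) = (M * ?G) * ?W" using G W assms(1) by simp
  also have "\<dots> = ?G * (M * ?W)" unfolding MG using G W assms(1) by simp
  also have "\<dots> = ?G * (?W * M)" using Cons by simp
  also have "\<dots> = (?G * ?W) * M" using G W assms(1) by simp
  finally show ?case by simp
qed (use assms(1) in simp)

lemma gen_word_flip:
  assumes "\<And>i. i \<in> set xs \<Longrightarrow> Gs i \<in> carrier_mat n n" and "distinct xs" and "j \<in> set xs"
  shows "gen_word n (Gs(j := - Gs j)) xs = - gen_word n Gs xs"
  using assms
proof (induction xs)
  case (Cons i xs)
  have W: "gen_word n Gs xs \<in> carrier_mat n n" using Cons.prems by (auto intro: gen_word_carrier)
  have G: "Gs i \<in> carrier_mat n n" using Cons.prems by auto
  show ?case
  proof (cases "i = j")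
    case True
    then have "j \<notin> set xs" using Cons.prems by auto
    then have eq: "gen_word n (Gs(j := - Gs j)) xs = gen_word n Gs xs"
      unfolding gen_word_def by (intro foldr_cong) auto
    have "gen_word n (Gs(j := - Gs j)) (i # xs) = - Gs i * gen_word n Gs xs"
      unfolding gen_word_Cons eq using True by simp
    also have "\<dots> = - gen_word n Gs (i # xs)" using G W by simp
    finally show ?thesis .
  next
    case False
    then have IH: "gen_word n (Gs(j := - Gs j)) xs = - gen_word n Gs xs"
      by (intro Cons.IH) (use Cons.prems in auto)
    have "gen_word n (Gs(j := - Gs j)) (i # xs) = Gs i * - gen_word n Gs xs"
      unfolding gen_word_Cons IH using False by simp
    also have "\<dots> = - gen_word n Gs (i # xs)" using G W by simp
    finally show ?thesis .
  qed
qed simp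

locale clifford_gens =
  fixes n :: nat and R :: "nat set" and Gs :: "nat \<Rightarrow> complex mat"
  assumes finite_gens: "finite R"
    and gen_carrier: "i \<in> R \<Longrightarrow> Gs i \<in> carrier_mat n n"
    and gen_square: "i \<in> R \<Longrightarrow> Gs i * Gs i = - 1\<^sub>m n"
    and gen_unitary: "i \<in> R \<Longrightarrow> mat_H (Gs i) * Gs i = 1\<^sub>m n"
    and gen_anticommute: "i \<in> R \<Longrightarrow> j \<in> R \<Longrightarrow> i \<noteq> j \<Longrightarrow> Gs i * Gs j = - (Gs j * Gs i)"
begin

definition gprod :: "nat set \<Rightarrow> complex mat" where
  "gprod S = gen_word n Gs (sorted_list_of_set S)"

lemma gprod_empty[simp]: "gprod {} = 1\<^sub>m n"
  by (simp add: gprod_def)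

lemma gprod_insert_Min:
  assumes "finite S" "\<forall>x\<in>S. a < x"
  shows "gprod (insert a S) = Gs a * gprod S"
proof -
  have "Min (insert a S) = a" using assms by (auto intro!: Min_eqI)
  moreover have "insert a S - {a} = S" using assms by auto
  ultimately show ?thesis
    using assms sorted_list_of_set_nonempty[of "insert a S"] by (simp add: gprod_def)
qed

lemma gprod_singleton: "i \<in> R \<Longrightarrow> gprod {i} = Gs i"
  using gen_carrier[of i] by (simp add: gprod_def)

lemma finite_subset_gens: "S \<subseteq> R \<Longrightarrow> finite S"
  using finite_gens finite_subset by blast

lemma gprod_carrier: "S \<subseteq> R \<Longrightarrow> gprod S \<in> carrier_mat n n"
  unfolding gprod_def by (intro gen_word_carrier) (auto simp: finite_subset_gens gen_carrier)

lemma gprod_unitary: "S \<subseteq> R \<Longrightarrow> mat_H (gprod S) * gprod S = 1\<^sub>m n"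
  unfolding gprod_def
  by (intro gen_word_unitary) (auto simp: finite_subset_gens gen_carrier gen_unitary)

lemma gen_mult_gprod:
  assumes aR: "a \<in> R" and "U \<subseteq> R"
  shows "Gs a * gprod U =
    (-1) ^ (card {u\<in>U. u < a} + (if a \<in> U then 1 else 0)) \<cdot>\<^sub>m gprod (sym_diff U {a})"
  using finite_subset_gens[OF assms(2)] assms(2)
proof (induction U rule: finite_linorder_min_induct)
  case empty
  then show ?case using gen_carrier[OF aR] aR by (simp add: gprod_singleton one_smult_mat)
next
  case (insert b U)
  have bR: "b \<in> R" and UR: "U \<subseteq> R" using insert.prems by auto
  have Ga: "Gs a \<in> carrier_mat n n" and Gb: "Gs b \<in> carrier_mat n n" and PU: "gprod U \<in> carrier_mat n n"
    using gen_carrier aR bR gprod_carrier UR by auto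
  have PbU: "gprod (insert b U) = Gs b * gprod U" by (rule gprod_insert_Min) fact+
  consider "a < b" | "a = b" | "b < a" by linarith
  then show ?case
  proof cases
    case 1
    then have a_less: "\<forall>x\<in>insert b U. a < x" using insert.hyps(2) by auto
    then have "a \<notin> insert b U" and no_less: "{u\<in>insert b U. u < a} = {}"
      and sym_diff: "sym_diff (insert b U) {a} = insert a (insert b U)" by auto
    moreover have "gprod (insert a (insert b U)) = Gs a * gprod (insert b U)"
      using insert.hyps(1) a_less by (intro gprod_insert_Min) auto
    ultimately show ?thesis unfolding no_less sym_diff by (simp add: one_smult_mat)
  next
    case 2
    have "Gs a * gprod (insert b U) = (Gs a * Gs a) * gprod U"
      unfolding PbU using 2 by (simp add: assoc_mult_mat[OF Gb Gb PU])
    also have "\<dots> = - gprod U" using gen_square[OF aR] PU by simp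
    also have "\<dots> = (-1) ^ (card {u\<in>insert b U. u < a} + (if a \<in> insert b U then 1 else 0)) \<cdot>\<^sub>m
        gprod (sym_diff (insert b U) {a})"
    proof -
      have no_less: "{u\<in>insert b U. u < a} = {}" and sym_diff: "sym_diff (insert b U) {a} = U"
        using 2 insert.hyps(2) by auto
      show ?thesis unfolding no_less sym_diff using 2 by (simp add: minus_one_smult_mat)
    qed
    finally show ?thesis .
  next
    case 3
    define c where "c = card {u\<in>U. u < a} + (if a \<in> U then 1 else 0)"
    have PV: "gprod (sym_diff U {a}) \<in> carrier_mat n n" using UR aR by (intro gprod_carrier) auto
    have "Gs a * gprod (insert b U) = (Gs a * Gs b) * gprod U"
      unfolding PbU by (simp add: assoc_mult_mat[OF Ga Gb PU])
    also have "\<dots> = - (Gs b * Gs a) * gprod U" using gen_anticommute[OF aR bR] 3 by simp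
    also have "\<dots> = - (Gs b * (Gs a * gprod U))" using Ga Gb PU by simp
    also have "\<dots> = - ((-1) ^ c \<cdot>\<^sub>m (Gs b * gprod (sym_diff U {a})))"
      unfolding insert.IH[OF UR] c_def[symmetric] using Gb PV by (simp add: mult_smult_distrib)
    also have "\<dots> = (-1) ^ Suc c \<cdot>\<^sub>m gprod (insert b (sym_diff U {a}))"
    proof -
      have "gprod (insert b (sym_diff U {a})) = Gs b * gprod (sym_diff U {a})"
        using insert.hyps 3 by (intro gprod_insert_Min) auto
      then show ?thesis by (simp add: minus_one_smult_mat[symmetric] smult_smult_mat)
    qed
    also have "insert b (sym_diff U {a}) = sym_diff (insert b U) {a}" using 3 by auto
    also have "Suc c = card {u\<in>insert b U. u < a} + (if a \<in> insert b U then 1 else 0)"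
    proof -
      have "{u\<in>insert b U. u < a} = insert b {u\<in>U. u < a}" using 3 by auto
      moreover have "b \<notin> U" using insert.hyps(2) by auto
      ultimately show ?thesis using insert.hyps(1) 3 by (simp add: c_def)
    qed
    finally show ?thesis .
  qed
qed

lemma gprod_mult:
  assumes "S \<subseteq> R" "T \<subseteq> R"
  shows "gprod S * gprod T =
    (-1) ^ (card {(i,j). i \<in> S \<and> j \<in> T \<and> j < i} + card (S \<inter> T)) \<cdot>\<^sub>m gprod (sym_diff S T)"
  using finite_subset_gens[OF assms(1)] assms
proof (induction S rule: finite_linorder_min_induct)
  case empty
  then show ?case using left_mult_one_mat[OF gprod_carrier[of T]] by (simp add: one_smult_mat)
next
  case (insert a S)
  have aR: "a \<in> R" and SR: "S \<subseteq> R" and TR: "T \<subseteq> R" using insert.prems by auto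
  have PS: "gprod S \<in> carrier_mat n n" and PT: "gprod T \<in> carrier_mat n n"
    and Ga: "Gs a \<in> carrier_mat n n" using gprod_carrier SR TR gen_carrier aR by auto
  have VR: "sym_diff S T \<subseteq> R" using SR TR by auto
  then have PV: "gprod (sym_diff S T) \<in> carrier_mat n n" by (rule gprod_carrier)
  define N where "N = card {(i,j). i \<in> S \<and> j \<in> T \<and> j < i} + card (S \<inter> T)"
  define c where "c = card {u\<in>sym_diff S T. u < a} + (if a \<in> sym_diff S T then 1 else 0)"
  have "gprod (insert a S) * gprod T = Gs a * (gprod S * gprod T)"
    using gprod_insert_Min[OF insert.hyps(1,2)] Ga PS PT by simp
  also have "\<dots> = (-1) ^ N \<cdot>\<^sub>m (Gs a * gprod (sym_diff S T))"
    unfolding insert.IH[OF SR TR] N_def[symmetric] using Ga PV by (simp add: mult_smult_distrib)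
  also have "\<dots> = (-1) ^ (N + c) \<cdot>\<^sub>m gprod (sym_diff (sym_diff S T) {a})"
    unfolding gen_mult_gprod[OF aR VR] c_def[symmetric] by (simp add: smult_smult_mat power_add)
  also have "sym_diff (sym_diff S T) {a} = sym_diff (insert a S) T" using insert.hyps(2) by auto
  also have "N + c = card {(i,j). i \<in> insert a S \<and> j \<in> T \<and> j < i} + card (insert a S \<inter> T)"
  proof -
    have split: "{(i,j). i \<in> insert a S \<and> j \<in> T \<and> j < i} =
        {(i,j). i \<in> S \<and> j \<in> T \<and> j < i} \<union> ({a} \<times> {j\<in>T. j < a})"
      by auto
    have "finite {(i,j). i \<in> S \<and> j \<in> T \<and> j < i}"
      by (rule finite_subset[of _ "S \<times> T"]) (use insert.hyps(1) finite_subset_gens[OF TR] in auto)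
    then have "card {(i,j). i \<in> insert a S \<and> j \<in> T \<and> j < i} =
        card {(i,j). i \<in> S \<and> j \<in> T \<and> j < i} + card {j\<in>T. j < a}"
      unfolding split using finite_subset_gens[OF TR] insert.hyps(2)
      by (subst card_Un_disjoint) (auto simp: card_cartesian_product)
    moreover have "card (insert a S \<inter> T) = card (S \<inter> T) + (if a \<in> T then 1 else 0)"
      using insert.hyps by auto
    moreover have "{u\<in>sym_diff S T. u < a} = {j\<in>T. j < a}" "a \<in> sym_diff S T \<longleftrightarrow> a \<in> T"
      using insert.hyps(2) by auto
    ultimately show ?thesis unfolding N_def c_def by simp
  qed
  finally show ?case .
qed

lemma rep_of_gens_eq: "S \<subseteq> R \<Longrightarrow> rep_of_gens n Gs (b, S) = (if b then -1 else 1) \<cdot>\<^sub>m gprod S"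
  using gprod_carrier[of S]
  by (cases b) (auto simp: rep_of_gens_def gprod_def gen_word_def smult_one_mult_mat one_smult_mat)

lemma rep_of_gens_hom:
  assumes R: "R = {1..M}"
  shows "rep_of_gens n Gs \<in> hom (Gm M) (Ugrp n)"
proof -
  define sg :: "bool \<Rightarrow> complex" where "sg b = (if b then -1 else 1)" for b
  have carrier: "rep_of_gens n Gs x \<in> carrier (Ugrp n)" if "x \<in> carrier (Gm M)" for x
  proof -
    obtain b S where x: "x = (b, S)" by (cases x)
    have SR: "S \<subseteq> R" using that R x by (auto simp: Gm_def)
    have PS: "gprod S \<in> carrier_mat n n" using gprod_carrier SR .
    have "mat_H (sg b \<cdot>\<^sub>m gprod S) * (sg b \<cdot>\<^sub>m gprod S) = (cnj (sg b) * sg b) \<cdot>\<^sub>m (mat_H (gprod S) * gprod S)"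
      using smult_mult_smult_mat[OF mat_H_carrier[OF PS] PS] by (simp add: mat_H_smult)
    also have "\<dots> = 1\<^sub>m n" using gprod_unitary[OF SR] by (simp add: sg_def one_smult_mat)
    finally show ?thesis using x rep_of_gens_eq[OF SR, of b] PS by (simp add: Ugrp_def sg_def)
  qed
  have mult: "rep_of_gens n Gs (Gm_mult x y) = rep_of_gens n Gs x * rep_of_gens n Gs y"
    if "x \<in> carrier (Gm M)" "y \<in> carrier (Gm M)" for x y
  proof -
    obtain a S b T where x: "x = (a, S)" and y: "y = (b, T)" by (cases x, cases y)
    have SR: "S \<subseteq> R" and TR: "T \<subseteq> R" using that R x y by (auto simp: Gm_def)
    define N where "N = card {(i,j). i \<in> S \<and> j \<in> T \<and> j < i} + card (S \<inter> T)"
    have PS: "gprod S \<in> carrier_mat n n" and PT: "gprod T \<in> carrier_mat n n"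
      using gprod_carrier SR TR by auto
    have VR: "sym_diff S T \<subseteq> R" using SR TR by auto
    have xy: "Gm_mult x y = ((a \<noteq> b) \<noteq> odd N, sym_diff S T)"
      unfolding x y Gm_mult_def N_def by simp
    have sign: "sg ((a \<noteq> b) \<noteq> odd N) = sg a * sg b * (-1) ^ N"
      by (cases a; cases b; cases "even N") (auto simp: sg_def)
    have "rep_of_gens n Gs x * rep_of_gens n Gs y = (sg a \<cdot>\<^sub>m gprod S) * (sg b \<cdot>\<^sub>m gprod T)"
      unfolding x y sg_def using rep_of_gens_eq SR TR by simp
    also have "\<dots> = (sg a * sg b) \<cdot>\<^sub>m (gprod S * gprod T)"
      using smult_mult_smult_mat[OF PS PT] by simp
    also have "\<dots> = sg ((a \<noteq> b) \<noteq> odd N) \<cdot>\<^sub>m gprod (sym_diff S T)"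
      unfolding gprod_mult[OF SR TR] N_def[symmetric] sign by (simp add: smult_smult_mat)
    also have "\<dots> = rep_of_gens n Gs (Gm_mult x y)" unfolding xy sg_def using rep_of_gens_eq[OF VR] by simp
    finally show ?thesis by simp
  qed
  show ?thesis
    unfolding hom_def using carrier mult by (auto simp: Gm_def Ugrp_def)
qed

lemma rep_of_gens_carrier: "S \<subseteq> R \<Longrightarrow> rep_of_gens n Gs (b, S) \<in> carrier_mat n n"
  using rep_of_gens_eq gprod_carrier by simp

lemma rep_of_gens_singleton: "i \<in> R \<Longrightarrow> rep_of_gens n Gs (False, {i}) = Gs i"
  using rep_of_gens_eq[of "{i}" False] by (simp add: gprod_singleton one_smult_mat)

lemma gprod_commute:
  assumes "M \<in> carrier_mat n n" "\<And>j. j \<in> R \<Longrightarrow> M * Gs j = Gs j * M" "S \<subseteq> R"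
  shows "M * gprod S = gprod S * M"
  unfolding gprod_def using assms finite_subset_gens[OF assms(3)]
  by (intro gen_word_commute) (auto simp: gen_carrier)

lemma rep_of_gens_commute:
  assumes "M \<in> carrier_mat n n" "\<And>j. j \<in> R \<Longrightarrow> M * Gs j = Gs j * M" "S \<subseteq> R"
  shows "M * rep_of_gens n Gs (b, S) = rep_of_gens n Gs (b, S) * M"
  using gprod_commute[OF assms] gprod_carrier[OF assms(3)] assms(1)
  by (simp add: rep_of_gens_eq[OF assms(3)] mult_smult_distrib mult_smult_assoc_mat)

text \<open>Moving \<open>Gs j\<close> through the product over all of \<open>R\<close> from the left passes the generators
  below \<open>j\<close>, from the right those above \<open>j\<close>; together these are \<open>card R - 1\<close>, an even number.\<close>
lemma gprod_full_commute_gen: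
  assumes "odd (card R)" "j \<in> R"
  shows "gprod R * Gs j = Gs j * gprod R"
proof -
  define lo where "lo = card {u\<in>R. u < j}"
  define hi where "hi = card {u\<in>R. j < u}"
  have "R - {j} = {u\<in>R. u < j} \<union> {u\<in>R. j < u}" by auto
  then have "card (R - {j}) = lo + hi"
    unfolding lo_def hi_def by (simp add: card_Un_disjoint finite_gens disjoint_iff)
  then have "card R = Suc (lo + hi)" using card_Suc_Diff1[OF finite_gens assms(2)] by simp
  then have "even lo \<longleftrightarrow> even hi" using assms(1) by auto
  then have sign: "(-1::complex) ^ (hi + 1) = (-1) ^ (lo + 1)" by (simp add: minus_one_power_iff)
  have pairs: "{(i, l). i \<in> R \<and> l \<in> {j} \<and> l < i} = {u\<in>R. j < u} \<times> {j}" by auto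
  have "gprod R * Gs j = gprod R * gprod {j}" using gprod_singleton assms(2) by simp
  also have "\<dots> = (-1) ^ (hi + 1) \<cdot>\<^sub>m gprod (sym_diff R {j})"
    using gprod_mult[of R "{j}"] assms(2) unfolding pairs hi_def by (simp add: card_cartesian_product)
  also have "\<dots> = Gs j * gprod R"
    unfolding sign lo_def using gen_mult_gprod[OF assms(2), of R] assms(2) by simp
  finally show ?thesis .
qed

lemma rep_of_gens_flip:
  assumes "j \<in> S" "S \<subseteq> R"
  shows "rep_of_gens n (Gs(j := - Gs j)) (False, S) = - rep_of_gens n Gs (False, S)"
proof -
  have flipped: "gen_word n (Gs(j := - Gs j)) (sorted_list_of_set S) = - gprod S"
    unfolding gprod_def using assms finite_subset_gens[OF assms(2)]
    by (intro gen_word_flip) (auto simp: gen_carrier)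
  have "rep_of_gens n (Gs(j := - Gs j)) (False, S) =
      1\<^sub>m n * gen_word n (Gs(j := - Gs j)) (sorted_list_of_set S)"
    unfolding rep_of_gens_def gen_word_def by simp
  also have "\<dots> = - gprod S" unfolding flipped using gprod_carrier[OF assms(2)] by simp
  finally show ?thesis using rep_of_gens_eq[OF assms(2), of False] by (simp add: one_smult_mat)
qed

lemma clifford_gens_flip: "clifford_gens n R (Gs(j := - Gs j))"
proof -
  define s :: "nat \<Rightarrow> complex" where "s i = (if i = j then -1 else 1)" for i
  have flip: "(Gs(j := - Gs j)) i = s i \<cdot>\<^sub>m Gs i" for i
    by (simp add: s_def minus_one_smult_mat one_smult_mat)
  have s_sq: "s i * s i = 1" "cnj (s i) * s i = 1" for i by (simp_all add: s_def)
  show ?thesis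
  proof
    fix i l assume i: "i \<in> R" and l: "l \<in> R"
    note G = gen_carrier[OF i] and H = gen_carrier[OF l]
    show "(Gs(j := - Gs j)) i \<in> carrier_mat n n" unfolding flip using G by simp
    show "(Gs(j := - Gs j)) i * (Gs(j := - Gs j)) i = - 1\<^sub>m n"
      unfolding flip smult_mult_smult_mat[OF G G] s_sq gen_square[OF i] by (simp add: one_smult_mat)
    show "mat_H ((Gs(j := - Gs j)) i) * (Gs(j := - Gs j)) i = 1\<^sub>m n"
      using smult_mult_smult_mat[OF mat_H_carrier[OF G] G]
      unfolding flip mat_H_smult by (simp add: s_sq gen_unitary[OF i] one_smult_mat)
    assume "i \<noteq> l"
    then show "(Gs(j := - Gs j)) i * (Gs(j := - Gs j)) l = - ((Gs(j := - Gs j)) l * (Gs(j := - Gs j)) i)"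
      unfolding flip smult_mult_smult_mat[OF G H] smult_mult_smult_mat[OF H G]
        gen_anticommute[OF i l \<open>i \<noteq> l\<close>]
      by (simp add: smult_uminus_mat mult.commute)
  qed (rule finite_gens)
qed

lemma irreducible_rep_of_gens:
  assumes R: "R = {1..M}" and "0 < n"
    and irreducible: "\<And>W. invariant_subspace n S W \<Longrightarrow> W = {0\<^sub>v n} \<or> W = carrier_vec n"
    and S: "\<And>A. A \<in> S \<Longrightarrow> A = 1\<^sub>m n \<or> (\<exists>j\<in>R. \<exists>c. A = c \<cdot>\<^sub>m Gs j)"
  shows "irreducible_rep (Gm M) n (rep_of_gens n Gs)"
  unfolding irreducible_rep_def
proof (intro conjI allI impI)
  fix W assume inv: "invariant_subspace n (rep_of_gens n Gs ` carrier (Gm M)) W"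
  have gen: "Gs j *\<^sub>v v \<in> W" if "j \<in> R" "v \<in> W" for j v
  proof -
    have "(False, {j}) \<in> carrier (Gm M)" using that R by (auto simp: Gm_def)
    then have "Gs j \<in> rep_of_gens n Gs ` carrier (Gm M)" using rep_of_gens_singleton[OF that(1)] by force
    then show ?thesis using inv that(2) unfolding invariant_subspace_def by auto
  qed
  have "invariant_subspace n S W"
    unfolding invariant_subspace_def
  proof (intro conjI ballI)
    fix A v assume "A \<in> S" "v \<in> W"
    then have v: "v \<in> carrier_vec n" using inv unfolding invariant_subspace_def by auto
    from S[OF \<open>A \<in> S\<close>] show "A *\<^sub>v v \<in> W"
    proof (elim disjE bexE exE)
      fix j c assume "j \<in> R" "A = c \<cdot>\<^sub>m Gs j"
      then have "A *\<^sub>v v = c \<cdot>\<^sub>v (Gs j *\<^sub>v v)" using gen_carrier[OF \<open>j \<in> R\<close>] v by (simp add: smult_mat_mult_vec)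
      then show ?thesis using gen[OF \<open>j \<in> R\<close> \<open>v \<in> W\<close>] inv unfolding invariant_subspace_def by auto
    qed (use v \<open>v \<in> W\<close> in simp)
  qed (use inv in \<open>auto simp: invariant_subspace_def\<close>)
  then show "W = {0\<^sub>v n} \<or> W = carrier_vec n" by (rule irreducible)
qed fact

end

lemma clifford_gens_if_orthonormal:
  assumes "finite R" "0 \<notin> R"
    and carrier: "\<And>i. i \<in> insert 0 R \<Longrightarrow> E i \<in> carrier_mat n n"
    and E0: "E 0 = 1\<^sub>m n"
    and orthonormal: "\<And>i l. i \<in> insert 0 R \<Longrightarrow> l \<in> insert 0 R \<Longrightarrow>
      mat_H (E i) * E l + mat_H (E l) * E i = (if i = l then 2 else 0) \<cdot>\<^sub>m 1\<^sub>m n"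
  shows "clifford_gens n R E"
proof
  fix i l assume i: "i \<in> R" and l: "l \<in> R"
  have E: "E i \<in> carrier_mat n n" "E l \<in> carrier_mat n n" using carrier i l by auto
  show "E i \<in> carrier_mat n n" by fact
  show unitary: "mat_H (E i) * E i = 1\<^sub>m n"
    using orthonormal[of i i] i E by (intro mat_eq_one_if_double) auto
  have skew: "mat_H (E j) = - E j" if "j \<in> R" for j
  proof -
    have "mat_H (E j) * E 0 + mat_H (E 0) * E j = (if j = 0 then 2 else 0) \<cdot>\<^sub>m 1\<^sub>m n"
      using that by (intro orthonormal) auto
    then have "mat_H (E j) + E j = 0 \<cdot>\<^sub>m 1\<^sub>m n"
      using that carrier[of j] E0 \<open>0 \<notin> R\<close> by (simp split: if_splits)
    then show ?thesis using carrier[of j] that by (intro mat_eq_uminus_if_add_zero) auto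
  qed
  have "- (E i * E i) = 1\<^sub>m n" using unitary skew[OF i] E by simp
  then show "E i * E i = - 1\<^sub>m n" by (metis uminus_uminus_mat)
  assume "i \<noteq> l"
  have "mat_H (E i) * E l + mat_H (E l) * E i = (if i = l then 2 else 0) \<cdot>\<^sub>m 1\<^sub>m n"
    using i l by (intro orthonormal) auto
  then have "- (E i * E l) + - (E l * E i) = 0 \<cdot>\<^sub>m 1\<^sub>m n"
    using \<open>i \<noteq> l\<close> E unfolding skew[OF i] skew[OF l] by simp
  then have "- (E i * E l) = - (- (E l * E i))"
    using E by (intro mat_eq_uminus_if_add_zero) auto
  then show "E i * E l = - (E l * E i)" by (metis uminus_uminus_mat)
qed (use assms(1) in simp)

section \<open>Schur's lemma and non-equivalence\<close>

lemma commuting_mat_scalar_if_irreducible: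
  fixes M :: "complex mat"
  assumes "irreducible_rep G n \<rho>" and M: "M \<in> carrier_mat n n"
    and "\<And>g. g \<in> carrier G \<Longrightarrow> \<rho> g \<in> carrier_mat n n \<and> M * \<rho> g = \<rho> g * M"
  shows "\<exists>c. M = c \<cdot>\<^sub>m 1\<^sub>m n"
proof -
  have "0 < n" and irreducible:
    "\<And>W. invariant_subspace n (\<rho> ` carrier G) W \<Longrightarrow> W = {0\<^sub>v n} \<or> W = carrier_vec n"
    using assms(1) unfolding irreducible_rep_def by auto
  obtain c where "eigenvalue M c" using spectrum_non_empty[OF M \<open>0 < n\<close>] by (auto simp: spectrum_def)
  then obtain u where u: "u \<in> carrier_vec n" "u \<noteq> 0\<^sub>v n" "M *\<^sub>v u = c \<cdot>\<^sub>v u"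
    using M unfolding eigenvalue_def eigenvector_def by auto
  define E where "E = {v \<in> carrier_vec n. M *\<^sub>v v = c \<cdot>\<^sub>v v}"
  have "invariant_subspace n (\<rho> ` carrier G) E"
    unfolding invariant_subspace_def
  proof (intro conjI ballI allI)
    fix v w assume "v \<in> E" "w \<in> E"
    then show "v + w \<in> E"
      unfolding E_def using M by (auto simp: mult_add_distrib_mat_vec smult_add_distrib_vec)
  next
    fix d v assume "v \<in> E"
    then have "M *\<^sub>v (d \<cdot>\<^sub>v v) = c \<cdot>\<^sub>v (d \<cdot>\<^sub>v v)"
      unfolding E_def using M by (simp add: mult_mat_vec smult_smult_assoc mult.commute)
    then show "d \<cdot>\<^sub>v v \<in> E" using \<open>v \<in> E\<close> unfolding E_def by simp
  next
    fix A v assume "A \<in> \<rho> ` carrier G" "v \<in> E"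
    then obtain g where "g \<in> carrier G" "A = \<rho> g" by auto
    then have A: "A \<in> carrier_mat n n" and MA: "M * A = A * M" using assms(3) by auto
    have v: "v \<in> carrier_vec n" "M *\<^sub>v v = c \<cdot>\<^sub>v v" using \<open>v \<in> E\<close> E_def by auto
    have "M *\<^sub>v (A *\<^sub>v v) = (M * A) *\<^sub>v v" using M A v by simp
    also have "\<dots> = A *\<^sub>v (M *\<^sub>v v)" unfolding MA using M A v by simp
    also have "\<dots> = c \<cdot>\<^sub>v (A *\<^sub>v v)" unfolding v(2) using A v by (simp add: mult_mat_vec)
    finally show "A *\<^sub>v v \<in> E" unfolding E_def using A v by simp
  qed (use M in \<open>auto simp: E_def\<close>)
  moreover have "E \<noteq> {0\<^sub>v n}" using u E_def by auto
  ultimately have E: "E = carrier_vec n" using irreducible by blast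
  have "M = c \<cdot>\<^sub>m 1\<^sub>m n"
  proof (rule eq_matI)
    fix i j assume ij: "i < dim_row (c \<cdot>\<^sub>m 1\<^sub>m n)" "j < dim_col (c \<cdot>\<^sub>m 1\<^sub>m n)"
    then have "unit_vec n j \<in> E" unfolding E by simp
    then have "M *\<^sub>v unit_vec n j = c \<cdot>\<^sub>v unit_vec n j" unfolding E_def by simp
    then have "(M *\<^sub>v unit_vec n j) $ i = (c \<cdot>\<^sub>v unit_vec n j) $ i" by simp
    then show "M $$ (i, j) = (c \<cdot>\<^sub>m 1\<^sub>m n) $$ (i, j)" using ij M by auto
  qed (use M in auto)
  then show ?thesis ..
qed

lemma not_equivalent_reps_if_scalar_negated:
  assumes "z \<in> carrier G" "\<rho> z = c \<cdot>\<^sub>m 1\<^sub>m n" "\<sigma> z = - \<rho> z" "c \<noteq> 0" "0 < n"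
  shows "\<not> equivalent_reps G n \<rho> \<sigma>"
proof
  assume "equivalent_reps G n \<rho> \<sigma>"
  then obtain T where T: "T \<in> carrier_mat n n" "invertible_mat T" and "T * \<rho> z = \<sigma> z * T"
    using assms(1) unfolding equivalent_reps_def by blast
  then have "c \<cdot>\<^sub>m T = - (c \<cdot>\<^sub>m T)"
    using assms(2,3) by (simp add: mult_smult_one_mat smult_one_mult_mat)
  have "T = 0\<^sub>m n n"
  proof (rule eq_matI)
    fix i j assume "i < dim_row (0\<^sub>m n n)" "j < dim_col (0\<^sub>m n n :: complex mat)"
    then have "c * T $$ (i, j) = - (c * T $$ (i, j))"
      using T(1) arg_cong[OF \<open>c \<cdot>\<^sub>m T = - (c \<cdot>\<^sub>m T)\<close>, of "\<lambda>A. A $$ (i, j)"] by simp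
    then show "T $$ (i, j) = 0\<^sub>m n n $$ (i, j)"
      using assms(4) \<open>i < dim_row (0\<^sub>m n n)\<close> \<open>j < dim_col (0\<^sub>m n n)\<close> by simp
  qed (use T in auto)
  obtain B where TB: "T * B = 1\<^sub>m n" and BT: "B * T = 1\<^sub>m (dim_row B)"
    using T unfolding invertible_mat_def inverts_mat_def by auto
  have "B \<in> carrier_mat n n"
    using arg_cong[OF TB, of dim_col] arg_cong[OF BT, of dim_col] T(1) by auto
  then have "T * B = 0\<^sub>m n n" using \<open>T = 0\<^sub>m n n\<close> by simp
  then show False using TB assms(5) by (auto dest!: arg_cong[where f = "\<lambda>A. A $$ (0, 0)"])
qed

lemma (in clifford_gens) rep_of_gens_full_scalar:
  assumes R: "R = {1..M}" and "odd M" and irreducible: "irreducible_rep (Gm M) n (rep_of_gens n Gs)"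
  shows "\<exists>c. c \<noteq> 0 \<and> rep_of_gens n Gs (False, R) = c \<cdot>\<^sub>m 1\<^sub>m n"
proof -
  have Z: "rep_of_gens n Gs (False, R) = gprod R"
    using rep_of_gens_eq[of R False] by (simp add: one_smult_mat)
  have Z_carrier: "gprod R \<in> carrier_mat n n" by (rule gprod_carrier) simp
  have "odd (card R)" using R \<open>odd M\<close> by simp
  then obtain c where c: "gprod R = c \<cdot>\<^sub>m 1\<^sub>m n"
    using commuting_mat_scalar_if_irreducible[OF irreducible Z_carrier]
      rep_of_gens_commute[OF Z_carrier gprod_full_commute_gen] rep_of_gens_carrier R
    by (fastforce simp: Gm_def)
  have "0 < n" using irreducible unfolding irreducible_rep_def by simp
  have "c \<noteq> 0"
  proof
    assume "c = 0"
    have "mat_H (gprod R) * gprod R = 0\<^sub>m n n" unfolding c \<open>c = 0\<close> by (rule eq_matI) auto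
    then show False using gprod_unitary[of R] \<open>0 < n\<close>
      by (auto dest!: arg_cong[where f = "\<lambda>A. A $$ (0, 0)"])
  qed
  then show ?thesis using c Z by auto
qed

lemma (in clifford_gens) not_equivalent_rep_of_gens_flip:
  assumes R: "R = {1..M}" and "odd M" and irreducible: "irreducible_rep (Gm M) n (rep_of_gens n Gs)"
    and "j \<in> R"
  shows "\<not> equivalent_reps (Gm M) n (rep_of_gens n Gs) (rep_of_gens n (Gs(j := - Gs j)))"
proof -
  obtain c where "c \<noteq> 0" "rep_of_gens n Gs (False, R) = c \<cdot>\<^sub>m 1\<^sub>m n"
    using rep_of_gens_full_scalar[OF assms(1-3)] by blast
  moreover have "(False, R) \<in> carrier (Gm M)" using R by (simp add: Gm_def)
  moreover have "0 < n" using irreducible unfolding irreducible_rep_def by simp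
  ultimately show ?thesis
    using rep_of_gens_flip[OF \<open>j \<in> R\<close>] by (intro not_equivalent_reps_if_scalar_negated) auto
qed

section \<open>The designs \<open>C\<^sub>k\<close> and \<open>C\<^sub>k\<^sup>-\<close>\<close>

text \<open>Throughout, \<open>C\<^sub>k\<close> appears as \<open>CC (Suc m)\<close>, a matrix of size \<open>2\<^sup>m\<close>.\<close>

lemma CC_Suc_Suc:
  "CC (Suc (Suc m)) z = four_block_mat (CC (Suc m) z) (z (Suc (Suc m)) \<cdot>\<^sub>m 1\<^sub>m (2^m))
     ((- cnj (z (Suc (Suc m)))) \<cdot>\<^sub>m 1\<^sub>m (2^m)) (mat_H (CC (Suc m) z))"
  by simp

lemma CC_carrier: "CC (Suc m) z \<in> carrier_mat (2^m) (2^m)"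
proof (induction m)
  case (Suc m)
  have "CC (Suc (Suc m)) z \<in> carrier_mat (2^m + 2^m) (2^m + 2^m)"
    unfolding CC_Suc_Suc by (rule four_block_carrier_mat) (use Suc in auto)
  then show ?case by (simp add: mult_2)
qed simp

definition twice_re_inner :: "nat \<Rightarrow> (nat \<Rightarrow> complex) \<Rightarrow> (nat \<Rightarrow> complex) \<Rightarrow> complex" where
  "twice_re_inner m z w = (\<Sum>l\<in>{1..m}. z l * cnj (w l) + w l * cnj (z l))"

lemma twice_re_inner_Suc:
  "twice_re_inner (Suc m) z w =
     twice_re_inner m z w + (z (Suc m) * cnj (w (Suc m)) + w (Suc m) * cnj (z (Suc m)))"
  by (simp add: twice_re_inner_def)

lemma four_block_anticommutator:
  fixes A B :: "complex mat" and a b c :: complex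
  assumes A: "A \<in> carrier_mat n n" and B: "B \<in> carrier_mat n n"
    and IH1: "mat_H A * B + mat_H B * A = c \<cdot>\<^sub>m 1\<^sub>m n"
    and IH2: "A * mat_H B + B * mat_H A = c \<cdot>\<^sub>m 1\<^sub>m n"
  defines "Z \<equiv> four_block_mat A (a \<cdot>\<^sub>m 1\<^sub>m n) ((- cnj a) \<cdot>\<^sub>m 1\<^sub>m n) (mat_H A)"
    and "W \<equiv> four_block_mat B (b \<cdot>\<^sub>m 1\<^sub>m n) ((- cnj b) \<cdot>\<^sub>m 1\<^sub>m n) (mat_H B)"
  shows "mat_H Z * W + mat_H W * Z = (c + (a * cnj b + b * cnj a)) \<cdot>\<^sub>m 1\<^sub>m (n + n)"
    and "Z * mat_H W + W * mat_H Z = (c + (a * cnj b + b * cnj a)) \<cdot>\<^sub>m 1\<^sub>m (n + n)"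
proof -
  have dims: "dim_row A = n" "dim_col A = n" "dim_row B = n" "dim_col B = n" using A B by auto
  have entries:
    "(mat_H B * A) $$ (i,j) = c * (if i = j then 1 else 0) - (mat_H A * B) $$ (i,j)"
    "(B * mat_H A) $$ (i,j) = c * (if i = j then 1 else 0) - (A * mat_H B) $$ (i,j)"
    if "i < n" "j < n" for i j
  proof -
    have "(mat_H A * B + mat_H B * A) $$ (i,j) = (c \<cdot>\<^sub>m 1\<^sub>m n) $$ (i,j)"
      and "(A * mat_H B + B * mat_H A) $$ (i,j) = (c \<cdot>\<^sub>m 1\<^sub>m n) $$ (i,j)"
      using IH1 IH2 by simp_all
    then show "(mat_H B * A) $$ (i,j) = c * (if i = j then 1 else 0) - (mat_H A * B) $$ (i,j)"
      and "(B * mat_H A) $$ (i,j) = c * (if i = j then 1 else 0) - (A * mat_H B) $$ (i,j)"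
      using that dims by (simp_all add: algebra_simps del: index_mult_mat(1))
  qed
  have HZ: "mat_H Z = four_block_mat (mat_H A) ((- a) \<cdot>\<^sub>m 1\<^sub>m n) (cnj a \<cdot>\<^sub>m 1\<^sub>m n) A"
    unfolding Z_def by (subst mat_H_four_block_mat[OF A]) (use A in \<open>auto simp: mat_H_smult\<close>)
  have HW: "mat_H W = four_block_mat (mat_H B) ((- b) \<cdot>\<^sub>m 1\<^sub>m n) (cnj b \<cdot>\<^sub>m 1\<^sub>m n) B"
    unfolding W_def by (subst mat_H_four_block_mat[OF B]) (use B in \<open>auto simp: mat_H_smult\<close>)
  have rhs: "(c + (a * cnj b + b * cnj a)) \<cdot>\<^sub>m 1\<^sub>m (n + n) = four_block_mat
      ((c + (a * cnj b + b * cnj a)) \<cdot>\<^sub>m 1\<^sub>m n) ((c + (a * cnj b + b * cnj a)) \<cdot>\<^sub>m 0\<^sub>m n n)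
      ((c + (a * cnj b + b * cnj a)) \<cdot>\<^sub>m 0\<^sub>m n n) ((c + (a * cnj b + b * cnj a)) \<cdot>\<^sub>m 1\<^sub>m n)"
  proof -
    have one: "1\<^sub>m (n + n) = four_block_mat (1\<^sub>m n) (0\<^sub>m n n) (0\<^sub>m n n) (1\<^sub>m n)" by simp
    show ?thesis unfolding one by (rule smult_four_block_mat) auto
  qed
  note carr = A B mat_H_carrier[OF A] mat_H_carrier[OF B]
  show "mat_H Z * W + mat_H W * Z = (c + (a * cnj b + b * cnj a)) \<cdot>\<^sub>m 1\<^sub>m (n + n)"
    unfolding HZ HW unfolding Z_def W_def rhs
    apply (subst mult_four_block_mat[of _ n n _ n _ n _ _ n _ n], (auto simp: carr)[8])+
    apply (subst add_four_block_mat[of _ n n _ n _ n], (auto intro!: carrier_matI simp: dims)[8])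
    apply (rule cong_four_block_mat)
    by (rule eq_matI; simp add: dims entries smult_one_mult_mat mult_smult_one_mat algebra_simps
        del: index_mult_mat(1))+
  show "Z * mat_H W + W * mat_H Z = (c + (a * cnj b + b * cnj a)) \<cdot>\<^sub>m 1\<^sub>m (n + n)"
    unfolding HZ HW unfolding Z_def W_def rhs
    apply (subst mult_four_block_mat[of _ n n _ n _ n _ _ n _ n], (auto simp: carr)[8])+
    apply (subst add_four_block_mat[of _ n n _ n _ n], (auto intro!: carrier_matI simp: dims)[8])
    apply (rule cong_four_block_mat)
    by (rule eq_matI; simp add: dims entries smult_one_mult_mat mult_smult_one_mat algebra_simps
        del: index_mult_mat(1))+
qed

lemma CC_anticommutator:
  "mat_H (CC (Suc m) z) * CC (Suc m) w + mat_H (CC (Suc m) w) * CC (Suc m) z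
     = twice_re_inner (Suc m) z w \<cdot>\<^sub>m 1\<^sub>m (2^m) \<and>
   CC (Suc m) z * mat_H (CC (Suc m) w) + CC (Suc m) w * mat_H (CC (Suc m) z)
     = twice_re_inner (Suc m) z w \<cdot>\<^sub>m 1\<^sub>m (2^m)"
proof (induction m)
  case 0
  show ?case
    by (auto intro!: eq_matI simp: twice_re_inner_def scalar_prod_def algebra_simps)
next
  case (Suc m)
  then show ?case
    unfolding CC_Suc_Suc twice_re_inner_Suc[of "Suc m"] power_Suc mult_2
    using four_block_anticommutator[OF CC_carrier CC_carrier] by blast
qed

definition scaled_unit :: "nat \<Rightarrow> complex \<Rightarrow> nat \<Rightarrow> complex" where
  "scaled_unit p \<alpha> = (\<lambda>l. if l = p then \<alpha> else 0)"

lemma twice_re_inner_scaled_unit: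
  "twice_re_inner m (scaled_unit p \<alpha>) (scaled_unit q \<beta>) =
     (if p = q \<and> 1 \<le> p \<and> p \<le> m then \<alpha> * cnj \<beta> + \<beta> * cnj \<alpha> else 0)"
proof (cases "p = q \<and> 1 \<le> p \<and> p \<le> m")
  case True
  then have "twice_re_inner m (scaled_unit p \<alpha>) (scaled_unit q \<beta>) =
      (\<Sum>l\<in>{1..m}. if l = p then \<alpha> * cnj \<beta> + \<beta> * cnj \<alpha> else 0)"
    unfolding twice_re_inner_def scaled_unit_def by (intro sum.cong) auto
  then show ?thesis using True by simp
next
  case False
  then have "twice_re_inner m (scaled_unit p \<alpha>) (scaled_unit q \<beta>) = (\<Sum>l\<in>{1..m}. 0)"
    unfolding twice_re_inner_def scaled_unit_def by (intro sum.cong) auto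
  then show ?thesis by (simp only: if_not_P[OF False]) simp
qed

lemma CC_scaled_unit_one: "CC (Suc m) (scaled_unit 1 1) = 1\<^sub>m (2^m)"
proof (induction m)
  case (Suc m)
  have "CC (Suc (Suc m)) (scaled_unit 1 1) =
      four_block_mat (1\<^sub>m (2^m)) (0\<^sub>m (2^m) (2^m)) (0\<^sub>m (2^m) (2^m)) (1\<^sub>m (2^m))"
    unfolding CC_Suc_Suc Suc by (intro cong_four_block_mat; rule eq_matI; simp add: scaled_unit_def)
  then show ?case by (simp add: mult_2)
qed (auto simp: scaled_unit_def)

lemma CC_zero:
  "(\<And>l. 1 \<le> l \<Longrightarrow> l \<le> Suc m \<Longrightarrow> z l = 0) \<Longrightarrow> CC (Suc m) z = 0\<^sub>m (2^m) (2^m)"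
proof (induction m)
  case (Suc m)
  have CC0: "CC (Suc m) z = 0\<^sub>m (2^m) (2^m)" and z0: "z (Suc (Suc m)) = 0" using Suc by auto
  have "CC (Suc (Suc m)) z =
      four_block_mat (0\<^sub>m (2^m) (2^m)) (0\<^sub>m (2^m) (2^m)) (0\<^sub>m (2^m) (2^m)) (0\<^sub>m (2^m) (2^m))"
    unfolding CC_Suc_Suc CC0 z0 by (intro cong_four_block_mat; rule eq_matI; simp)
  then show ?case by (simp add: mult_2)
qed auto

lemma CC_uminus: "CC (Suc m) (\<lambda>l. - z l) = - CC (Suc m) z"
proof (induction m)
  case (Suc m)
  show ?case
    unfolding CC_Suc_Suc Suc
    by (rule eq_matI) (use CC_carrier[of m z] in \<open>auto simp: mult_2\<close>)
qed auto

definition coef_point :: "nat \<Rightarrow> nat \<Rightarrow> nat \<Rightarrow> complex" where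
  "coef_point k j = (if j \<le> k then scaled_unit j 1 else scaled_unit (j - k) \<i>)"

lemma Fcoef_eq: "Fcoef D k j = D (coef_point k j)"
  by (simp add: Fcoef_def coef_point_def scaled_unit_def)

lemma twice_re_inner_coef_point:
  assumes "1 \<le> j" "j \<le> 2 * k" "1 \<le> j'" "j' \<le> 2 * k"
  shows "twice_re_inner k (coef_point k j) (coef_point k j') = (if j = j' then 2 else 0)"
  using assms by (auto simp: coef_point_def twice_re_inner_scaled_unit)

lemma Egen_CC_zero: "Egen (CC (Suc m)) (Suc m) 0 = 1\<^sub>m (2^m)"
proof -
  have "Egen (CC (Suc m)) (Suc m) 0 = CC (Suc m) (scaled_unit 1 1)"
    by (simp add: Egen_def Fcoef_def scaled_unit_def)
  then show ?thesis by (simp only: CC_scaled_unit_one)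
qed

lemma Ggen_CC: "Ggen (CC (Suc m)) (Suc m) i = CC (Suc m) (coef_point (Suc m) (Suc i))"
  unfolding Ggen_def Egen_CC_zero using CC_carrier[of m "coef_point (Suc m) (Suc i)"]
  by (simp add: Egen_def Fcoef_eq)

lemma clifford_gens_Ggen_CC: "clifford_gens (2^m) {1..2*m+1} (Ggen (CC (Suc m)) (Suc m))"
proof (rule clifford_gens_if_orthonormal)
  show "Ggen (CC (Suc m)) (Suc m) 0 = 1\<^sub>m (2^m)" by (simp add: Ggen_def Egen_CC_zero)
  show "Ggen (CC (Suc m)) (Suc m) i \<in> carrier_mat (2^m) (2^m)" for i
    unfolding Ggen_CC by (rule CC_carrier)
  fix i l assume "i \<in> insert 0 {1..2*m+1}" "l \<in> insert 0 {1..2*m+1}"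
  then show "mat_H (Ggen (CC (Suc m)) (Suc m) i) * Ggen (CC (Suc m)) (Suc m) l +
      mat_H (Ggen (CC (Suc m)) (Suc m) l) * Ggen (CC (Suc m)) (Suc m) i =
      (if i = l then 2 else 0) \<cdot>\<^sub>m 1\<^sub>m (2^m)"
    unfolding Ggen_CC using CC_anticommutator twice_re_inner_coef_point[of "Suc i" "Suc m" "Suc l"]
    by auto
qed auto

lemma Fcoef_CCminus:
  "Fcoef (CCminus (Suc m)) (Suc m) j =
     (if j = 2 * Suc m then - Fcoef (CC (Suc m)) (Suc m) j else Fcoef (CC (Suc m)) (Suc m) j)"
proof -
  have "(coef_point (Suc m) j)(Suc m := cnj (coef_point (Suc m) j (Suc m))) =
      (if j = 2 * Suc m then (\<lambda>l. - coef_point (Suc m) j l) else coef_point (Suc m) j)"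
    by (auto simp: coef_point_def scaled_unit_def)
  then show ?thesis by (simp add: Fcoef_eq CCminus_def CC_uminus)
qed

lemma Ggen_CCminus:
  "Ggen (CCminus (Suc m)) (Suc m) =
     (Ggen (CC (Suc m)) (Suc m))(2*m+1 := - Ggen (CC (Suc m)) (Suc m) (2*m+1))"
proof
  fix i
  have E0: "Egen (CCminus (Suc m)) (Suc m) 0 = 1\<^sub>m (2^m)"
    using Fcoef_CCminus[of m 1] Egen_CC_zero[of m] by (simp add: Egen_def)
  have "Ggen (CCminus (Suc m)) (Suc m) i =
      (if i = 2*m+1 then - Ggen (CC (Suc m)) (Suc m) i else Ggen (CC (Suc m)) (Suc m) i)"
    unfolding Ggen_def E0 Egen_CC_zero unfolding Egen_def Fcoef_CCminus
    by (simp add: Fcoef_eq left_mult_one_mat[OF CC_carrier]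
        left_mult_one_mat[OF uminus_carrier_mat[OF CC_carrier]])
  then show "Ggen (CCminus (Suc m)) (Suc m) i =
      ((Ggen (CC (Suc m)) (Suc m))(2*m+1 := - Ggen (CC (Suc m)) (Suc m) (2*m+1))) i"
    by simp
qed

section \<open>Irreducibility\<close>

lemma invariant_subspace_dim_one:
  assumes "invariant_subspace 1 M W"
  shows "W = {0\<^sub>v 1} \<or> W = carrier_vec 1"
proof (cases "W \<subseteq> {0\<^sub>v 1}")
  case False
  then obtain v where v: "v \<in> W" "v \<noteq> 0\<^sub>v 1" by auto
  then have v1: "v \<in> carrier_vec 1" using assms unfolding invariant_subspace_def by auto
  have "v $ 0 \<noteq> 0"
  proof
    assume "v $ 0 = 0"
    then have "v = 0\<^sub>v 1" using v1 by (intro eq_vecI) auto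
    then show False using v by simp
  qed
  have "w \<in> W" if "w \<in> carrier_vec 1" for w
  proof -
    have "w = (w $ 0 / v $ 0) \<cdot>\<^sub>v v" using that v1 \<open>v $ 0 \<noteq> 0\<close> by (intro eq_vecI) auto
    then show ?thesis using v(1) assms unfolding invariant_subspace_def by metis
  qed
  then show ?thesis using assms unfolding invariant_subspace_def by auto
qed (use assms in \<open>auto simp: invariant_subspace_def\<close>)

definition CC_coefs :: "nat \<Rightarrow> complex mat set" where
  "CC_coefs m = {CC (Suc m) (scaled_unit p \<alpha>) | p \<alpha>. 1 \<le> p \<and> p \<le> Suc m \<and> (\<alpha> = 1 \<or> \<alpha> = \<i>)}"

lemma CC_Suc_Suc_mult_append:
  assumes "a \<in> carrier_vec (2^m)" "b \<in> carrier_vec (2^m)"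
  shows "CC (Suc (Suc m)) z *\<^sub>v (a @\<^sub>v b) =
    (CC (Suc m) z *\<^sub>v a + z (Suc (Suc m)) \<cdot>\<^sub>v b) @\<^sub>v
    ((- cnj (z (Suc (Suc m)))) \<cdot>\<^sub>v a + mat_H (CC (Suc m) z) *\<^sub>v b)"
  unfolding CC_Suc_Suc using assms CC_carrier[of m z]
  by (subst four_block_mat_mult_vec[of _ "2^m" "2^m"]) (auto simp: smult_mat_mult_vec)

lemma CC_last_coef_mult_append:
  assumes "a \<in> carrier_vec (2^m)" "b \<in> carrier_vec (2^m)"
  shows "CC (Suc (Suc m)) (scaled_unit (Suc (Suc m)) \<alpha>) *\<^sub>v (a @\<^sub>v b) =
           (\<alpha> \<cdot>\<^sub>v b) @\<^sub>v (- cnj \<alpha> \<cdot>\<^sub>v a)"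
proof -
  have zero: "CC (Suc m) (scaled_unit (Suc (Suc m)) \<alpha>) = 0\<^sub>m (2^m) (2^m)"
    by (rule CC_zero) (auto simp: scaled_unit_def)
  show ?thesis
    unfolding CC_Suc_Suc_mult_append[OF assms] zero using assms by (simp add: scaled_unit_def)
qed

lemma CC_scaled_unit_mem_CC_coefs:
  "1 \<le> p \<Longrightarrow> p \<le> Suc m \<Longrightarrow> \<alpha> = 1 \<or> \<alpha> = \<i> \<Longrightarrow> CC (Suc m) (scaled_unit p \<alpha>) \<in> CC_coefs m"
  unfolding CC_coefs_def by (intro CollectI exI[where x = p] exI[where x = \<alpha>]) auto

context
  fixes m :: nat and W :: "complex vec set"
  assumes invariant: "invariant_subspace (2^Suc m) (CC_coefs (Suc m)) W"
begin

private lemma closed: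
  "v \<in> W \<Longrightarrow> w \<in> W \<Longrightarrow> v + w \<in> W" "v \<in> W \<Longrightarrow> c \<cdot>\<^sub>v v \<in> W"
  "A \<in> CC_coefs (Suc m) \<Longrightarrow> v \<in> W \<Longrightarrow> A *\<^sub>v v \<in> W"
  using invariant unfolding invariant_subspace_def by auto

lemma invariant_subspace_upper_half:
  "invariant_subspace (2^m) (CC_coefs m) {a \<in> carrier_vec (2^m). a @\<^sub>v 0\<^sub>v (2^m) \<in> W}"
  unfolding invariant_subspace_def
proof (intro conjI ballI allI)
  have zero: "0\<^sub>v (2^m) @\<^sub>v 0\<^sub>v (2^m) = 0\<^sub>v (2^Suc m)" by (intro eq_vecI) auto
  have "0\<^sub>v (2^Suc m) \<in> W" using invariant unfolding invariant_subspace_def by blast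
  then show "0\<^sub>v (2^m) \<in> {a \<in> carrier_vec (2^m). a @\<^sub>v 0\<^sub>v (2^m) \<in> W}"
    unfolding mem_Collect_eq zero by simp
next
  fix a b assume "a \<in> {a \<in> carrier_vec (2^m). a @\<^sub>v 0\<^sub>v (2^m) \<in> W}"
    "b \<in> {a \<in> carrier_vec (2^m). a @\<^sub>v 0\<^sub>v (2^m) \<in> W}"
  moreover have "(a + b) @\<^sub>v 0\<^sub>v (2^m) = (a @\<^sub>v 0\<^sub>v (2^m)) + (b @\<^sub>v 0\<^sub>v (2^m))" 
    if "a \<in> carrier_vec (2^m)" "b \<in> carrier_vec (2^m)"
    using that by (intro eq_vecI) auto
  ultimately show "a + b \<in> {a \<in> carrier_vec (2^m). a @\<^sub>v 0\<^sub>v (2^m) \<in> W}"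
    using closed(1) by auto
next
  fix c a assume "a \<in> {a \<in> carrier_vec (2^m). a @\<^sub>v 0\<^sub>v (2^m) \<in> W}"
  moreover have "(c \<cdot>\<^sub>v a) @\<^sub>v 0\<^sub>v (2^m) = c \<cdot>\<^sub>v (a @\<^sub>v 0\<^sub>v (2^m))" if "a \<in> carrier_vec (2^m)"
    using that by (intro eq_vecI) auto
  ultimately show "c \<cdot>\<^sub>v a \<in> {a \<in> carrier_vec (2^m). a @\<^sub>v 0\<^sub>v (2^m) \<in> W}"
    using closed(2) by auto
next
  fix A a assume "A \<in> CC_coefs m" and a: "a \<in> {a \<in> carrier_vec (2^m). a @\<^sub>v 0\<^sub>v (2^m) \<in> W}"
  then obtain p \<alpha> where A: "A = CC (Suc m) (scaled_unit p \<alpha>)"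
    and p: "1 \<le> p" "p \<le> Suc m" and \<alpha>: "\<alpha> = 1 \<or> \<alpha> = \<i>"
    unfolding CC_coefs_def by auto
  have A_carrier: "A \<in> carrier_mat (2^m) (2^m)" unfolding A by (rule CC_carrier)
  have "CC (Suc (Suc m)) (scaled_unit p \<alpha>) \<in> CC_coefs (Suc m)"
    using p \<alpha> by (intro CC_scaled_unit_mem_CC_coefs) auto
  moreover have "CC (Suc (Suc m)) (scaled_unit p \<alpha>) *\<^sub>v (a @\<^sub>v 0\<^sub>v (2^m)) = (A *\<^sub>v a) @\<^sub>v 0\<^sub>v (2^m)"
    using a p A_carrier mat_H_carrier[OF A_carrier] unfolding A
    by (subst CC_Suc_Suc_mult_append) (auto intro!: eq_vecI simp: scaled_unit_def scalar_prod_def)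
  ultimately show "A *\<^sub>v a \<in> {a \<in> carrier_vec (2^m). a @\<^sub>v 0\<^sub>v (2^m) \<in> W}"
    using closed(3) a A_carrier by fastforce
qed (auto)

private lemma last_coef_mem:
  "\<alpha> = 1 \<or> \<alpha> = \<i> \<Longrightarrow> v \<in> W \<Longrightarrow> CC (Suc (Suc m)) (scaled_unit (Suc (Suc m)) \<alpha>) *\<^sub>v v \<in> W"
  by (rule closed(3)[OF CC_scaled_unit_mem_CC_coefs]) auto

private lemma halves_mem:
  assumes a: "a \<in> carrier_vec (2^m)" and b: "b \<in> carrier_vec (2^m)" and ab: "a @\<^sub>v b \<in> W"
  shows "a @\<^sub>v 0\<^sub>v (2^m) \<in> W" "b @\<^sub>v 0\<^sub>v (2^m) \<in> W"
proof -
  define J where "J = CC (Suc (Suc m)) (scaled_unit (Suc (Suc m)) 1)"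
  define K where "K = CC (Suc (Suc m)) (scaled_unit (Suc (Suc m)) \<i>)"
  have "K *\<^sub>v (a @\<^sub>v b) = (\<i> \<cdot>\<^sub>v b) @\<^sub>v (\<i> \<cdot>\<^sub>v a)"
    unfolding K_def CC_last_coef_mult_append[OF a b] by simp
  also have "J *\<^sub>v \<dots> = (\<i> \<cdot>\<^sub>v a) @\<^sub>v (- \<i> \<cdot>\<^sub>v b)"
    unfolding J_def using a b by (subst CC_last_coef_mult_append) auto
  moreover have "J *\<^sub>v (K *\<^sub>v (a @\<^sub>v b)) \<in> W"
    unfolding J_def K_def by (intro last_coef_mem) (simp_all add: ab)
  ultimately have flipped: "(\<i> \<cdot>\<^sub>v a) @\<^sub>v (- \<i> \<cdot>\<^sub>v b) \<in> W" by simp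
  text \<open>Adding \<open>\<plusminus>\<surd>-1\<close> times this vector to \<open>a @ b\<close> separates the two halves.\<close>
  have "(1/2) \<cdot>\<^sub>v ((a @\<^sub>v b) + (- \<i>) \<cdot>\<^sub>v ((\<i> \<cdot>\<^sub>v a) @\<^sub>v (- \<i> \<cdot>\<^sub>v b))) = a @\<^sub>v 0\<^sub>v (2^m)"
    using a b by (intro eq_vecI) (auto simp: algebra_simps)
  then show "a @\<^sub>v 0\<^sub>v (2^m) \<in> W" using closed(1,2) ab flipped by metis
  have "(1/2) \<cdot>\<^sub>v ((a @\<^sub>v b) + \<i> \<cdot>\<^sub>v ((\<i> \<cdot>\<^sub>v a) @\<^sub>v (- \<i> \<cdot>\<^sub>v b))) = 0\<^sub>v (2^m) @\<^sub>v b"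
    using a b by (intro eq_vecI) (auto simp: algebra_simps)
  then have "0\<^sub>v (2^m) @\<^sub>v b \<in> W" using closed(1,2) ab flipped by metis
  then have "J *\<^sub>v (0\<^sub>v (2^m) @\<^sub>v b) \<in> W" unfolding J_def by (intro last_coef_mem) simp_all
  moreover have "J *\<^sub>v (0\<^sub>v (2^m) @\<^sub>v b) = b @\<^sub>v 0\<^sub>v (2^m)"
    unfolding J_def using b by (subst CC_last_coef_mult_append) (auto intro!: eq_vecI)
  ultimately show "b @\<^sub>v 0\<^sub>v (2^m) \<in> W" by simp
qed

private lemma lower_half_mem:
  assumes b: "b \<in> carrier_vec (2^m)" and "b @\<^sub>v 0\<^sub>v (2^m) \<in> W"
  shows "0\<^sub>v (2^m) @\<^sub>v b \<in> W"
proof -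
  define J where "J = CC (Suc (Suc m)) (scaled_unit (Suc (Suc m)) 1)"
  have "(-1) \<cdot>\<^sub>v (J *\<^sub>v (b @\<^sub>v 0\<^sub>v (2^m))) \<in> W"
    unfolding J_def using assms(2) by (intro closed(2) last_coef_mem) simp_all
  moreover have "(-1) \<cdot>\<^sub>v (J *\<^sub>v (b @\<^sub>v 0\<^sub>v (2^m))) = 0\<^sub>v (2^m) @\<^sub>v b"
    unfolding J_def using b by (subst CC_last_coef_mult_append) (auto intro!: eq_vecI)
  ultimately show ?thesis by simp
qed

lemma invariant_subspace_trivial_if_upper_half_trivial:
  assumes "{a \<in> carrier_vec (2^m). a @\<^sub>v 0\<^sub>v (2^m) \<in> W} = {0\<^sub>v (2^m)} \<or>
    {a \<in> carrier_vec (2^m). a @\<^sub>v 0\<^sub>v (2^m) \<in> W} = carrier_vec (2^m)"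
  shows "W = {0\<^sub>v (2^Suc m)} \<or> W = carrier_vec (2^Suc m)"
proof (cases "W \<subseteq> {0\<^sub>v (2^Suc m)}")
  case True
  then show ?thesis using invariant unfolding invariant_subspace_def by auto
next
  case False
  define n where "n = (2::nat)^m"
  have n: "2^Suc m = n + n" unfolding n_def by simp
  have W: "W \<subseteq> carrier_vec (n + n)" using invariant unfolding invariant_subspace_def n by simp
  obtain v where "v \<in> W" "v \<noteq> 0\<^sub>v (n + n)" using False n by auto
  then have v: "vec_first v n @\<^sub>v vec_last v n \<in> W" "vec_first v n @\<^sub>v vec_last v n \<noteq> 0\<^sub>v (n + n)"
    using W by auto
  have "vec_first v n @\<^sub>v 0\<^sub>v n \<in> W" "vec_last v n @\<^sub>v 0\<^sub>v n \<in> W"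
    using halves_mem[OF _ _ v(1)[unfolded n_def]] unfolding n_def by simp_all
  then have "vec_first v n \<in> {a \<in> carrier_vec n. a @\<^sub>v 0\<^sub>v n \<in> W}"
    "vec_last v n \<in> {a \<in> carrier_vec n. a @\<^sub>v 0\<^sub>v n \<in> W}" by simp_all
  moreover have "vec_first v n \<noteq> 0\<^sub>v n \<or> vec_last v n \<noteq> 0\<^sub>v n"
    using v(2) by (auto simp: append_vec_eq)
  ultimately have "{a \<in> carrier_vec n. a @\<^sub>v 0\<^sub>v n \<in> W} \<noteq> {0\<^sub>v n}" by blast
  then have all: "{a \<in> carrier_vec n. a @\<^sub>v 0\<^sub>v n \<in> W} = carrier_vec n"
    using assms unfolding n_def by blast
  have upper: "a @\<^sub>v 0\<^sub>v n \<in> W" if "a \<in> carrier_vec n" for a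
  proof -
    have "a \<in> {a \<in> carrier_vec n. a @\<^sub>v 0\<^sub>v n \<in> W}" unfolding all by (rule that)
    then show ?thesis by simp
  qed
  have "w \<in> W" if w: "w \<in> carrier_vec (n + n)" for w
  proof -
    have "vec_first w n @\<^sub>v 0\<^sub>v n \<in> W" "vec_last w n @\<^sub>v 0\<^sub>v n \<in> W" by (simp_all add: upper)
    then have "vec_first w n @\<^sub>v 0\<^sub>v n \<in> W" "0\<^sub>v n @\<^sub>v vec_last w n \<in> W"
      using lower_half_mem[of "vec_last w n"] unfolding n_def by simp_all
    then have "(vec_first w n @\<^sub>v 0\<^sub>v n) + (0\<^sub>v n @\<^sub>v vec_last w n) \<in> W" by (rule closed(1))
    moreover have "(vec_first w n @\<^sub>v 0\<^sub>v n) + (0\<^sub>v n @\<^sub>v vec_last w n) = w"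
      using w by (intro eq_vecI) (auto simp: vec_first_def vec_last_def)
    ultimately show ?thesis by simp
  qed
  then have "W = carrier_vec (n + n)" using W by blast
  then show ?thesis unfolding n by simp
qed

end

lemma CC_coefs_irreducible:
  "invariant_subspace (2^m) (CC_coefs m) W \<Longrightarrow> W = {0\<^sub>v (2^m)} \<or> W = carrier_vec (2^m)"
proof (induction m arbitrary: W)
  case 0
  then show ?case using invariant_subspace_dim_one by simp
next
  case (Suc m)
  show ?case
    by (rule invariant_subspace_trivial_if_upper_half_trivial[OF Suc.prems Suc.IH])
      (rule invariant_subspace_upper_half[OF Suc.prems])
qed

lemma CC_coefs_subset_gens:
  assumes "A \<in> CC_coefs m"
  shows "\<exists>j \<le> 2*m+1. A = Ggen (CC (Suc m)) (Suc m) j"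
proof -
  obtain p \<alpha> where A: "A = CC (Suc m) (scaled_unit p \<alpha>)"
    and p: "1 \<le> p" "p \<le> Suc m" and \<alpha>: "\<alpha> = 1 \<or> \<alpha> = \<i>"
    using assms unfolding CC_coefs_def by auto
  define j where "j = (if \<alpha> = 1 then p - 1 else p + m)"
  have "coef_point (Suc m) (Suc j) = scaled_unit p \<alpha>"
    using p \<alpha> by (auto simp: j_def coef_point_def)
  then have "A = Ggen (CC (Suc m)) (Suc m) j" unfolding A Ggen_CC by simp
  moreover have "j \<le> 2*m+1" unfolding j_def using p by auto
  ultimately show ?thesis by blast
qed

lemma irreducible_rep_of_Ggen:
  assumes D: "D = CC (Suc m) \<or> D = CCminus (Suc m)"
    and C: "clifford_gens (2^m) {1..2*m+1} (Ggen D (Suc m))"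
  shows "irreducible_rep (Gm (2*m+1)) (2^m) (rep_of_gens (2^m) (Ggen D (Suc m)))"
proof (rule clifford_gens.irreducible_rep_of_gens[OF C refl])
  fix A assume "A \<in> CC_coefs m"
  then obtain j where j: "j \<le> 2*m+1" "A = Ggen (CC (Suc m)) (Suc m) j"
    using CC_coefs_subset_gens by blast
  show "A = 1\<^sub>m (2^m) \<or> (\<exists>j\<in>{1..2*m+1}. \<exists>c. A = c \<cdot>\<^sub>m Ggen D (Suc m) j)"
  proof (cases "j = 0")
    case True
    then show ?thesis using j by (simp add: Ggen_def Egen_CC_zero)
  next
    case False
    have "A = (if Ggen D (Suc m) j = A then 1 else -1) \<cdot>\<^sub>m Ggen D (Suc m) j"
      using D j by (auto simp: Ggen_CCminus minus_one_smult_mat one_smult_mat)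
    then show ?thesis using False j by auto
  qed
qed (simp_all add: CC_coefs_irreducible)

theorem lemma3:
  fixes k :: nat
  assumes "k \<ge> 1"
  shows "induced_rep (CC k) k (2^(k-1)) \<in> hom (Gm (2*k-1)) (Ugrp (2^(k-1))) \<and>
         induced_rep (CCminus k) k (2^(k-1)) \<in> hom (Gm (2*k-1)) (Ugrp (2^(k-1))) \<and>
         irreducible_rep (Gm (2*k-1)) (2^(k-1)) (induced_rep (CC k) k (2^(k-1))) \<and>
         irreducible_rep (Gm (2*k-1)) (2^(k-1)) (induced_rep (CCminus k) k (2^(k-1))) \<and>
         \<not> equivalent_reps (Gm (2*k-1)) (2^(k-1))
             (induced_rep (CC k) k (2^(k-1))) (induced_rep (CCminus k) k (2^(k-1)))"
proof -
  obtain m where k: "k = Suc m" using assms by (cases k) auto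
  then have dims: "k - 1 = m" "2*k - 1 = 2*m+1" by simp_all
  have C: "clifford_gens (2^m) {1..2*m+1} (Ggen (CC (Suc m)) (Suc m))"
    by (rule clifford_gens_Ggen_CC)
  then have C_minus: "clifford_gens (2^m) {1..2*m+1} (Ggen (CCminus (Suc m)) (Suc m))"
    unfolding Ggen_CCminus by (rule clifford_gens.clifford_gens_flip)
  have irreducible: "irreducible_rep (Gm (2*m+1)) (2^m) (rep_of_gens (2^m) (Ggen (CC (Suc m)) (Suc m)))"
    using C by (intro irreducible_rep_of_Ggen) simp_all
  have irreducible_minus:
    "irreducible_rep (Gm (2*m+1)) (2^m) (rep_of_gens (2^m) (Ggen (CCminus (Suc m)) (Suc m)))"
    using C_minus by (intro irreducible_rep_of_Ggen) simp_all
  show ?thesis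
    unfolding induced_rep_def dims k
    using clifford_gens.rep_of_gens_hom[OF C refl] clifford_gens.rep_of_gens_hom[OF C_minus refl]
      irreducible irreducible_minus
      clifford_gens.not_equivalent_rep_of_gens_flip[OF C refl _ irreducible, of "2*m+1",
        folded Ggen_CCminus]
    by simp
qed

end
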